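(* Let $G=(X\cup Y,E)$ be a $d$-regular bipartite graph, $c\ge 1$, $t>0$, and let $C\subseteq X\cup Y$ be a cut with $|\nabla(C)|\le td$. Put $A'=C\cap X$, $W'=C\cap Y$ and $S_X:=\{v\in X\setminus A' : |N(v)\setminus W'|\le 3ct\}$. Then every closed $t$-contracting set $A\subseteq X$ with $|A\mathbin{\triangle}A'|\le ct$ satisfies $A\setminus A'\subseteq S_X$.
   Context: $N(S)$ is the neighbourhood of a vertex set $S$. The value $|\nabla(C)|$ of a cut $C$ is the number of edges with exactly one endpoint in $C$. The closure of $A\subseteq X$ is $[A]:=\{x\in X: N(x)\subseteq N(A)\}$, $A$ is closed if $A=[A]$, and $A$ is $t$-contracting if $|N(A)|<|[A]|+t$. *)

theory Defs
  imports Main "HOL.Real"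
begin

definition nbhd :: "('a \<Rightarrow> 'a \<Rightarrow> bool) \<Rightarrow> 'a set \<Rightarrow> 'a set" where
  "nbhd E S = {y. \<exists>x\<in>S. E x y}"

definition d_regular_bipartite ::
  "'a set \<Rightarrow> 'a set \<Rightarrow> ('a \<Rightarrow> 'a \<Rightarrow> bool) \<Rightarrow> nat \<Rightarrow> bool" where
  "d_regular_bipartite X Y E d \<longleftrightarrow>
     finite X \<and> finite Y \<and> X \<inter> Y = {} \<and>
     (\<forall>u v. E u v \<longrightarrow> E v u) \<and>
     (\<forall>u v. E u v \<longrightarrow> (u \<in> X \<and> v \<in> Y) \<or> (u \<in> Y \<and> v \<in> X)) \<and>
     (\<forall>v \<in> X \<union> Y. card (nbhd E {v}) = d)"

text \<open>Number of edges with exactly one endpoint in C (each edge counted once,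
  oriented from its endpoint in C).\<close>
definition cut_value :: "('a \<Rightarrow> 'a \<Rightarrow> bool) \<Rightarrow> 'a set \<Rightarrow> nat" where
  "cut_value E C = card {(u, v). u \<in> C \<and> v \<notin> C \<and> E u v}"

definition closure_X :: "'a set \<Rightarrow> ('a \<Rightarrow> 'a \<Rightarrow> bool) \<Rightarrow> 'a set \<Rightarrow> 'a set" where
  "closure_X X E A = {x \<in> X. nbhd E {x} \<subseteq> nbhd E A}"

definition closed_X :: "'a set \<Rightarrow> ('a \<Rightarrow> 'a \<Rightarrow> bool) \<Rightarrow> 'a set \<Rightarrow> bool" where
  "closed_X X E A \<longleftrightarrow> A = closure_X X E A"

definition contracting :: "'a set \<Rightarrow> ('a \<Rightarrow> 'a \<Rightarrow> bool) \<Rightarrow> real \<Rightarrow> 'a set \<Rightarrow> bool" where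
  "contracting X E t A \<longleftrightarrow>
     real (card (nbhd E A)) < real (card (closure_X X E A)) + t"

end

theory Submission
  imports Defs
begin

text \<open>Write \<open>A' = C \<inter> X\<close> and count the edges at \<open>B = N(A) - C\<close>. Every vertex of \<open>B\<close>
  sends its \<open>d\<close> edges into \<open>A'\<close>, into \<open>X - A\<close> or into \<open>A - A'\<close>. Edges of the first kind
  are cut edges, so there are at most \<open>td\<close> of them; since \<open>A\<close> is closed and \<open>t\<close>-contracting,
  \<open>N(A)\<close> sends only \<open>d(|N(A)| - |A|) < td\<close> edges outside \<open>A\<close>; and \<open>A - A'\<close> receives at
  most \<open>d |A - A'| \<le> dct\<close> edges. Hence \<open>|B| \<le> (2 + c) t \<le> 3ct\<close>, and \<open>B\<close> contains
  \<open>N(v) - C\<close> for every \<open>v \<in> A - A'\<close>.\<close>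

lemma nbhd_singleton: "nbhd E {x} = {y. E x y}"
  by (simp add: nbhd_def)

lemma sum_card_nbhd_inter_swap:
  assumes "finite S" "finite T" and sym: "\<And>u v. E u v \<Longrightarrow> E v u"
  shows "(\<Sum>x\<in>S. card (nbhd E {x} \<inter> T)) = (\<Sum>y\<in>T. card (nbhd E {y} \<inter> S))"
proof -
  have card_eq: "card (nbhd E {x} \<inter> U) = (\<Sum>y\<in>U. if E x y then 1 else 0)"
    if "finite U" for x and U :: "'a set"
  proof -
    have "nbhd E {x} \<inter> U = {y\<in>U. E x y}" by (auto simp: nbhd_singleton)
    then show ?thesis using that by (simp add: sum.inter_filter[symmetric])
  qed
  have "(\<Sum>x\<in>S. card (nbhd E {x} \<inter> T)) = (\<Sum>x\<in>S. \<Sum>y\<in>T. if E x y then (1::nat) else 0)"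
    using card_eq assms by simp
  also have "\<dots> = (\<Sum>y\<in>T. \<Sum>x\<in>S. if E x y then (1::nat) else 0)" by (rule sum.swap)
  also have "\<dots> = (\<Sum>y\<in>T. \<Sum>x\<in>S. if E y x then (1::nat) else 0)"
    using sym by (intro sum.cong refl) metis
  also have "\<dots> = (\<Sum>y\<in>T. card (nbhd E {y} \<inter> S))" using card_eq assms by simp
  finally show ?thesis .
qed

locale regular_bipartite =
  fixes X Y :: "'a set" and E :: "'a \<Rightarrow> 'a \<Rightarrow> bool" and d :: nat
  assumes regular: "d_regular_bipartite X Y E d"
begin

lemma finite_X: "finite X" and finite_Y: "finite Y" and disjoint_sides: "X \<inter> Y = {}"
  and edge_sym: "E u v \<Longrightarrow> E v u"
  and edge_between: "E u v \<Longrightarrow> (u \<in> X \<and> v \<in> Y) \<or> (u \<in> Y \<and> v \<in> X)"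
  and card_nbhd_singleton: "v \<in> X \<union> Y \<Longrightarrow> card (nbhd E {v}) = d"
  using regular unfolding d_regular_bipartite_def by auto

lemma nbhd_subset_vertices: "nbhd E S \<subseteq> X \<union> Y"
  using edge_between unfolding nbhd_def by blast

lemma finite_nbhd: "finite (nbhd E S)"
  using finite_subset[OF nbhd_subset_vertices] finite_X finite_Y by blast

lemma nbhd_side_X: "S \<subseteq> X \<Longrightarrow> nbhd E S \<subseteq> Y"
  using edge_between disjoint_sides unfolding nbhd_def by blast

lemma nbhd_singleton_subset: "x \<in> A \<Longrightarrow> nbhd E {x} \<subseteq> nbhd E A"
  unfolding nbhd_def by blast

lemma sum_card_nbhd_inter_le:
  assumes "S \<subseteq> X \<union> Y"
  shows "(\<Sum>x\<in>S. card (nbhd E {x} \<inter> T)) \<le> d * card S"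
proof -
  have "(\<Sum>x\<in>S. card (nbhd E {x} \<inter> T)) \<le> (\<Sum>x\<in>S. d)"
  proof (rule sum_mono)
    fix x assume "x \<in> S"
    then show "card (nbhd E {x} \<inter> T) \<le> d"
      using assms card_nbhd_singleton[of x] card_mono[OF finite_nbhd, of "nbhd E {x} \<inter> T" "{x}"]
      by auto
  qed
  then show ?thesis by (simp add: mult.commute)
qed

lemma cut_value_eq_sum:
  assumes "C \<subseteq> X \<union> Y"
  shows "cut_value E C = (\<Sum>u\<in>C. card (nbhd E {u} - C))"
proof -
  have "finite C" using assms finite_X finite_Y finite_subset by blast
  have "{(u, v). u \<in> C \<and> v \<notin> C \<and> E u v} = (SIGMA u:C. nbhd E {u} - C)"
    by (auto simp: nbhd_singleton)
  then show ?thesis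
    unfolding cut_value_def using \<open>finite C\<close> finite_nbhd by (simp add: card_SigmaI)
qed

lemma card_nbhd_edge_count:
  assumes "A \<subseteq> X"
  shows "d * card (nbhd E A) = d * card A + (\<Sum>y\<in>nbhd E A. card (nbhd E {y} - A))"
proof -
  let ?N = "nbhd E A"
  have "finite A" using assms finite_X finite_subset by blast
  have NY: "?N \<subseteq> Y" using nbhd_side_X[OF assms] .
  have "(\<Sum>y\<in>?N. card (nbhd E {y} \<inter> A)) = (\<Sum>x\<in>A. card (nbhd E {x} \<inter> ?N))"
    using sum_card_nbhd_inter_swap[OF finite_nbhd \<open>finite A\<close>] edge_sym by blast
  also have "\<dots> = (\<Sum>x\<in>A. d)"
    using assms nbhd_singleton_subset card_nbhd_singleton
    by (intro sum.cong refl) (auto simp: Int_absorb2)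
  finally have into_A: "(\<Sum>y\<in>?N. card (nbhd E {y} \<inter> A)) = d * card A" by simp
  have "d * card ?N = (\<Sum>y\<in>?N. card (nbhd E {y}))"
    using NY card_nbhd_singleton by (simp add: subset_iff)
  also have "\<dots> = (\<Sum>y\<in>?N. card (nbhd E {y} \<inter> A) + card (nbhd E {y} - A))"
    using finite_nbhd by (intro sum.cong refl) (metis card_Int_Diff)
  also have "\<dots> = d * card A + (\<Sum>y\<in>?N. card (nbhd E {y} - A))"
    using into_A by (simp add: sum.distrib)
  finally show ?thesis .
qed

lemma closed_contracting_edges_out_le:
  assumes "A \<subseteq> X" "closed_X X E A" "contracting X E t A"
  shows "real (\<Sum>y\<in>nbhd E A. card (nbhd E {y} - A)) \<le> real d * t"
proof -
  have "real (card (nbhd E A)) < real (card A) + t"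
    using assms(2,3) unfolding closed_X_def contracting_def by simp
  then have "real d * real (card (nbhd E A)) \<le> real d * (real (card A) + t)"
    by (intro mult_left_mono) auto
  moreover have "real d * real (card (nbhd E A))
      = real d * real (card A) + real (\<Sum>y\<in>nbhd E A. card (nbhd E {y} - A))"
    using card_nbhd_edge_count[OF assms(1)] by (simp only: of_nat_add[symmetric] of_nat_mult[symmetric] of_nat_eq_iff)
  ultimately show ?thesis by (simp add: algebra_simps)
qed

lemma card_nbhd_diff_cut_le:
  assumes "A \<subseteq> X" "C \<subseteq> X \<union> Y"
  shows "d * card (nbhd E A - C)
    \<le> cut_value E C + (\<Sum>y\<in>nbhd E A. card (nbhd E {y} - A)) + d * card (A - C)"
proof -
  let ?B = "nbhd E A - C"
  have finB: "finite ?B" using finite_nbhd by blast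
  have finC: "finite C" using assms(2) finite_X finite_Y finite_subset by blast
  have finAC: "finite (A - C)" using assms(1) finite_X finite_subset by blast
  have BY: "?B \<subseteq> Y" using nbhd_side_X[OF assms(1)] by blast
  have "d * card ?B = (\<Sum>y\<in>?B. card (nbhd E {y}))"
    using BY card_nbhd_singleton by (simp add: subset_iff)
  also have "\<dots> \<le> (\<Sum>y\<in>?B. card (nbhd E {y} \<inter> C) + card (nbhd E {y} - A)
                              + card (nbhd E {y} \<inter> (A - C)))"
  proof (rule sum_mono)
    fix y
    have "nbhd E {y} \<subseteq> (nbhd E {y} \<inter> C) \<union> (nbhd E {y} - A) \<union> (nbhd E {y} \<inter> (A - C))"
      by blast
    then have "card (nbhd E {y})
        \<le> card ((nbhd E {y} \<inter> C) \<union> (nbhd E {y} - A) \<union> (nbhd E {y} \<inter> (A - C)))"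
      using finite_nbhd by (intro card_mono) auto
    also have "\<dots> \<le> card ((nbhd E {y} \<inter> C) \<union> (nbhd E {y} - A)) + card (nbhd E {y} \<inter> (A - C))"
      by (rule card_Un_le)
    also have "\<dots> \<le> card (nbhd E {y} \<inter> C) + card (nbhd E {y} - A) + card (nbhd E {y} \<inter> (A - C))"
      using card_Un_le by simp
    finally show "card (nbhd E {y})
        \<le> card (nbhd E {y} \<inter> C) + card (nbhd E {y} - A) + card (nbhd E {y} \<inter> (A - C))" .
  qed
  also have "\<dots> = (\<Sum>y\<in>?B. card (nbhd E {y} \<inter> C)) + (\<Sum>y\<in>?B. card (nbhd E {y} - A))
                  + (\<Sum>y\<in>?B. card (nbhd E {y} \<inter> (A - C)))"
    by (simp only: sum.distrib)
  also have "\<dots> = (\<Sum>x\<in>C. card (nbhd E {x} \<inter> ?B)) + (\<Sum>y\<in>?B. card (nbhd E {y} - A))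
                  + (\<Sum>x\<in>A - C. card (nbhd E {x} \<inter> ?B))"
    using sum_card_nbhd_inter_swap[OF finC finB edge_sym]
      sum_card_nbhd_inter_swap[OF finAC finB edge_sym] by simp
  also have "\<dots> \<le> cut_value E C + (\<Sum>y\<in>nbhd E A. card (nbhd E {y} - A)) + d * card (A - C)"
  proof (intro add_mono)
    show "(\<Sum>x\<in>C. card (nbhd E {x} \<inter> ?B)) \<le> cut_value E C"
      unfolding cut_value_eq_sum[OF assms(2)]
      using finite_nbhd by (intro sum_mono card_mono) auto
    show "(\<Sum>y\<in>?B. card (nbhd E {y} - A)) \<le> (\<Sum>y\<in>nbhd E A. card (nbhd E {y} - A))"
      using finite_nbhd by (intro sum_mono2) auto
    show "(\<Sum>x\<in>A - C. card (nbhd E {x} \<inter> ?B)) \<le> d * card (A - C)"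
      using assms(1) by (intro sum_card_nbhd_inter_le) auto
  qed
  finally show ?thesis .
qed

lemma card_nbhd_diff_cut_bound:
  assumes "d > 0" "A \<subseteq> X" "C \<subseteq> X \<union> Y"
    and "closed_X X E A" "contracting X E t A"
    and cut: "real (cut_value E C) \<le> t * real d"
    and diff: "real (card (A - C)) \<le> c * t"
  shows "real (card (nbhd E A - C)) \<le> (2 + c) * t"
proof -
  have "real (d * card (nbhd E A - C))
      \<le> real (cut_value E C + (\<Sum>y\<in>nbhd E A. card (nbhd E {y} - A)) + d * card (A - C))"
    using card_nbhd_diff_cut_le[OF assms(2,3)] by (simp only: of_nat_le_iff)
  then have "real d * real (card (nbhd E A - C))
      \<le> real (cut_value E C) + real (\<Sum>y\<in>nbhd E A. card (nbhd E {y} - A))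
        + real d * real (card (A - C))"
    by simp
  also have "\<dots> \<le> t * real d + real d * t + real d * (c * t)"
    using cut closed_contracting_edges_out_le[OF assms(2,4,5)] diff
    by (intro add_mono mult_left_mono) auto
  also have "\<dots> = real d * ((2 + c) * t)" by (simp add: algebra_simps)
  finally show ?thesis using \<open>d > 0\<close> by (simp add: mult_le_cancel_left_pos)
qed

end

theorem claim1:
  fixes X Y :: "'a set" and E :: "'a \<Rightarrow> 'a \<Rightarrow> bool" and d :: nat
    and c t :: real and C A :: "'a set"
  assumes G: "d_regular_bipartite X Y E d"
    and c: "c \<ge> 1" and t: "t > 0"
    and C: "C \<subseteq> X \<union> Y"
    and cut: "real (cut_value E C) \<le> t * real d"
    and A_sub: "A \<subseteq> X"
    and A_closed: "closed_X X E A"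
    and A_contr: "contracting X E t A"
    and A_diff: "real (card ((A - (C \<inter> X)) \<union> ((C \<inter> X) - A))) \<le> c * t"
  shows "A - (C \<inter> X) \<subseteq>
    {v \<in> X - (C \<inter> X). real (card (nbhd E {v} - (C \<inter> Y))) \<le> 3 * c * t}"
proof
  interpret regular_bipartite X Y E d by (rule regular_bipartite.intro[OF G])
  fix v assume v: "v \<in> A - (C \<inter> X)"
  have "real (card (nbhd E {v} - (C \<inter> Y))) \<le> 3 * c * t"
  proof (cases "d = 0")
    case True
    then have "nbhd E {v} = {}" using v A_sub card_nbhd_singleton[of v] finite_nbhd by auto
    then show ?thesis using c t by simp
  next
    case False
    have "card (A - C) \<le> card ((A - (C \<inter> X)) \<union> ((C \<inter> X) - A))"
      using A_sub finite_X finite_subset by (intro card_mono) auto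
    then have "real (card (A - C)) \<le> c * t" using A_diff by linarith
    then have "real (card (nbhd E A - C)) \<le> (2 + c) * t"
      using False A_sub C A_closed A_contr cut by (intro card_nbhd_diff_cut_bound) auto
    moreover have "card (nbhd E {v} - (C \<inter> Y)) \<le> card (nbhd E A - C)"
      using v A_sub nbhd_side_X[of "{v}"] nbhd_singleton_subset[of v A] finite_nbhd
      by (intro card_mono) auto
    then have "real (card (nbhd E {v} - (C \<inter> Y))) \<le> real (card (nbhd E A - C))"
      by (rule of_nat_mono)
    moreover have "(2 + c) * t \<le> 3 * c * t" using c t by (simp add: algebra_simps)
    ultimately show ?thesis by linarith
  qed
  then show "v \<in> {v \<in> X - (C \<inter> X). real (card (nbhd E {v} - (C \<inter> Y))) \<le> 3 * c * t}"
    using v A_sub by blast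
qed

end
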